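(* Let $W:\mathbb{T}\to(-\infty,\infty]$ satisfy (H1)–(H4), let $\alpha\ge0$ and $0<d\le1$. Let $\rho$ be an even minimizer of $\mathcal{G}_\alpha$ over $\mathcal{M}_{\mathcal{D}\ge d}$ such that $I=[-M,M]$ satisfies $\mathcal{D}[\rho]=\rho(I)-|I|$. Then $(W*\rho)(x)\le\operatorname{ess\,inf}(W*\rho)$ for every $x\in\operatorname{supp}\rho\setminus\{\pm M\}$.
   Context: $\mathbb{T}=\mathbb{R}/\mathbb{Z}$ with Lebesgue measure $|\cdot|$. Hypotheses on $W$: (H1) $W\in L^1(\mathbb{T})\cap C^2(\mathbb{T}\setminus\{0\})$, $\int W=0$; (H2) $W$ even; (H3) $\lim_{x\to0}W(x)=W(0)=\infty$; (H4) $W''\ge C_1>0$ on $\mathbb{T}\setminus\{0\}$. $(W*\rho)(x)=\int W(x-y)\,d\rho(y)$; $\mathcal{H}[\rho]=-\operatorname{ess\,inf}(W*\rho)$; $\mathcal{D}[\rho]=\sup_I(\rho(I)-|I|)$ over closed arcs; $\mathcal{G}_\alpha=\mathcal{H}/\mathcal{D}^\alpha$; $\mathcal{M}_{\mathcal{D}\ge d}$ is the set of Borel probability measures with $\mathcal{D}\ge d$; even means $\rho(A)=\rho(-A)$. *)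

theory Defs
  imports "HOL-Probability.Probability"
begin

text \<open>Model of the torus T = R/Z: points are represented by reals, and the
  canonical representative of the class of x is frac x in [0,1).
  A kernel W on T is a 1-periodic function real => ereal.
  A Borel probability measure on T is a probability measure on the Borel sets
  of the real line concentrated on the fundamental domain [0,1).\<close>

definition torus_prob :: "real measure \<Rightarrow> bool" where
  "torus_prob \<rho> \<longleftrightarrow> prob_space \<rho> \<and> sets \<rho> = sets borel \<and> emeasure \<rho> {0..<1} = 1"

text \<open>Hypotheses (H1)-(H4), plus the standing convention that W lives on T
  (1-periodicity).  Finite-valuedness off 0 is implicit in (H1) (C^2 on T minus 0).\<close>

definition W_hyps :: "(real \<Rightarrow> ereal) \<Rightarrow> bool" where
  "W_hyps W \<longleftrightarrow>
     (\<forall>x. W (x + 1) = W x) \<and>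
     \<comment> \<open>(H1)\<close>
     (\<forall>x. x \<notin> \<int> \<longrightarrow> \<bar>W x\<bar> \<noteq> \<infinity>) \<and>
     set_integrable lborel {0..1} (\<lambda>x. real_of_ereal (W x)) \<and>
     (LINT x:{0..1}|lborel. real_of_ereal (W x)) = 0 \<and>
     (\<exists>W' W''. (\<forall>x. x \<notin> \<int> \<longrightarrow>
         ((\<lambda>y. real_of_ereal (W y)) has_real_derivative W' x) (at x) \<and>
         (W' has_real_derivative W'' x) (at x) \<and> isCont W'' x)
       \<comment> \<open>(H4)\<close>
       \<and> (\<exists>C1>0. \<forall>x. x \<notin> \<int> \<longrightarrow> W'' x \<ge> C1)) \<and>
     \<comment> \<open>(H2)\<close>
     (\<forall>x. W (- x) = W x) \<and>
     \<comment> \<open>(H3)\<close>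
     W 0 = \<infinity> \<and> (W \<longlongrightarrow> \<infinity>) (at 0)"

definition conv :: "(real \<Rightarrow> ereal) \<Rightarrow> real measure \<Rightarrow> real \<Rightarrow> ereal" where
  "conv W \<rho> x =
     enn2ereal (\<integral>\<^sup>+ y. e2ennreal (W (x - y)) \<partial>\<rho>)
     - enn2ereal (\<integral>\<^sup>+ y. e2ennreal (- W (x - y)) \<partial>\<rho>)"

definition ess_inf_T :: "(real \<Rightarrow> ereal) \<Rightarrow> ereal" where
  "ess_inf_T f = Sup {c. AE x in lborel. x \<in> {0..<1} \<longrightarrow> c \<le> f x}"

definition HH :: "(real \<Rightarrow> ereal) \<Rightarrow> real measure \<Rightarrow> ereal" where
  "HH W \<rho> = - ess_inf_T (conv W \<rho>)"

text \<open>Closed arcs of T are the images frac ` [a,b] with 0 <= b - a <= 1;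
  their length is b - a.\<close>

definition DD :: "real measure \<Rightarrow> real" where
  "DD \<rho> = (SUP ab \<in> {(a, b). a \<le> b \<and> b - a \<le> 1}.
              measure \<rho> (frac ` {fst ab..snd ab}) - (snd ab - fst ab))"

definition GG :: "real \<Rightarrow> (real \<Rightarrow> ereal) \<Rightarrow> real measure \<Rightarrow> ereal" where
  "GG \<alpha> W \<rho> = HH W \<rho> / ereal (DD \<rho> powr \<alpha>)"

definition M_D_ge :: "real \<Rightarrow> real measure set" where
  "M_D_ge d = {\<rho>. torus_prob \<rho> \<and> DD \<rho> \<ge> d}"

definition even_meas :: "real measure \<Rightarrow> bool" where
  "even_meas \<rho> \<longleftrightarrow> distr \<rho> borel (\<lambda>y. frac (- y)) = \<rho>"

definition supp_T :: "real measure \<Rightarrow> real set" where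
  "supp_T \<rho> = {x \<in> {0..<1}. \<forall>e>0. emeasure \<rho> (frac ` ball x e) > 0}"

end

theory Submission
  imports Defs "HOL-Library.Periodic_Fun"
begin

text \<open>Suppose W * rho exceeded its essential infimum at a point x0 of the support of rho other
  than the endpoints of the arc [-M, M]. Move a small proportion t of the mass of rho near x0 by
  +eps and -eps, half each. Far from x0 this raises the potential by a multiple of
  t eps^2 rho(near x0), by the uniform convexity (H4) of W; near x0 the potential is strictly above
  its essential infimum (it is lower semicontinuous) and loses at most a factor 1 - t. For
  suitable t the essential infimum therefore increases, i.e. H strictly decreases. As x0 is not an
  endpoint of the arc, for small eps no mass crosses the boundary of the arc, so D does not
  decrease, and G strictly decreases, contradicting minimality.\<close>

section \<open>The kernel\<close>

lemma
  assumes "W_hyps W"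
  shows W_hyps_periodic: "W (x + 1) = W x"
    and W_hyps_finite: "x \<notin> \<int> \<Longrightarrow> \<bar>W x\<bar> \<noteq> \<infinity>"
    and W_hyps_integrable: "set_integrable lborel {0..1} (\<lambda>x. real_of_ereal (W x))"
    and W_hyps_integral: "(LINT x:{0..1}|lborel. real_of_ereal (W x)) = 0"
    and W_hyps_second_derivative: "\<exists>W' W''. (\<forall>x. x \<notin> \<int> \<longrightarrow>
         ((\<lambda>y. real_of_ereal (W y)) has_real_derivative W' x) (at x) \<and>
         (W' has_real_derivative W'' x) (at x) \<and> isCont W'' x)
       \<and> (\<exists>C1>0. \<forall>x. x \<notin> \<int> \<longrightarrow> W'' x \<ge> C1)"
    and W_hyps_zero: "W 0 = \<infinity>"
    and W_hyps_tendsto_zero: "(W \<longlongrightarrow> \<infinity>) (at 0)"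
  using assms unfolding W_hyps_def by simp_all

lemma W_periodic:
  assumes "W_hyps W" "x - x' \<in> \<int>"
  shows "W x = W x'"
proof -
  interpret W: periodic_fun_simple' W
    by standard (rule W_hyps_periodic[OF assms(1)])
  obtain k where "x = x' + of_int k"
    using assms(2) by (metis Ints_cases add.commute diff_add_cancel)
  then show ?thesis by (simp add: W.plus_of_int)
qed

lemma W_Ints: "W_hyps W \<Longrightarrow> x \<in> \<int> \<Longrightarrow> W x = \<infinity>"
  using W_periodic[of W x 0] W_hyps_zero[of W] by simp

lemma W_real: "W_hyps W \<Longrightarrow> x \<notin> \<int> \<Longrightarrow> ereal (real_of_ereal (W x)) = W x"
  using W_hyps_finite[of W x] by (cases "W x") simp_all

lemma not_Ints_01: "0 < x \<Longrightarrow> x < (1::real) \<Longrightarrow> x \<notin> \<int>"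
  by (metis frac_eq frac_gt_0_iff less_imp_le)

lemma isCont_W:
  assumes "W_hyps W"
  shows "isCont W x"
proof (cases "x \<in> \<int>")
  case True
  have "(\<lambda>h. W (x + h)) = W"
    by (rule ext, rule W_periodic[OF assms]) (simp add: True)
  then have "(\<lambda>h. W (x + h)) \<midarrow>0\<rightarrow> \<infinity>"
    using W_hyps_tendsto_zero[OF assms] by simp
  then have "W \<midarrow>x\<rightarrow> \<infinity>"
    by (rule LIM_offset_zero_cancel)
  then show ?thesis
    unfolding isCont_def using W_Ints[OF assms True] by simp
next
  case False
  obtain W' where "\<And>y. y \<notin> \<int> \<Longrightarrow> ((\<lambda>y. real_of_ereal (W y)) has_real_derivative W' y) (at y)"
    using W_hyps_second_derivative[OF assms] by blast
  then have "isCont (\<lambda>y. real_of_ereal (W y)) x"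
    using False DERIV_isCont by blast
  then have "isCont (\<lambda>y. ereal (real_of_ereal (W y))) x"
    unfolding isCont_def by (rule tendsto_ereal)
  moreover have "eventually (\<lambda>y. y \<in> - \<int>) (nhds x)"
    by (rule eventually_nhds_in_open) (use False in auto)
  then have "eventually (\<lambda>y. ereal (real_of_ereal (W y)) = W y) (nhds x)"
    by eventually_elim (simp add: W_real[OF assms])
  ultimately show ?thesis
    using isCont_cong[of "\<lambda>y. ereal (real_of_ereal (W y))" W x] by blast
qed

lemma W_bounded_below:
  assumes "W_hyps W"
  obtains B where "0 \<le> B" "\<And>x. - ereal B \<le> W x"
proof -
  have "continuous_on {0..1} W"
    using isCont_W[OF assms] by (simp add: continuous_at_imp_continuous_on)
  then obtain x1 where x1: "\<forall>y\<in>{0..1}. W x1 \<le> W y"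
    using continuous_attains_inf[of "{0..1}" W] by auto
  have "W x1 \<noteq> - \<infinity>"
    using W_Ints[OF assms, of x1] W_real[OF assms, of x1] by (cases "x1 \<in> \<int>") auto
  then obtain B where B: "0 \<le> B" "- ereal B \<le> W x1"
  proof (cases "W x1")
    case (real r)
    then show ?thesis
      using that[of "max 0 (- r)"] by (simp add: max_def)
  qed (use that[of 0] in simp_all)
  have "- ereal B \<le> W x" for x
  proof -
    have "W x = W (frac x)"
      by (rule W_periodic[OF assms]) (simp add: frac_def)
    moreover have "frac x \<in> {0..1}"
      using frac_lt_1[of x] by simp
    ultimately show ?thesis
      using x1 B(2) by (metis order.trans)
  qed
  then show ?thesis
    using B(1) that by blast
qed

lemma W_uniformly_convex:
  assumes "W_hyps W"
  obtains C where "0 < C" "\<And>a u. 0 \<le> u \<Longrightarrow> 0 < a - u \<Longrightarrow> a + u < 1 \<Longrightarrow>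
     2 * real_of_ereal (W a) + C * u\<^sup>2 \<le> real_of_ereal (W (a - u)) + real_of_ereal (W (a + u))"
proof -
  obtain W' W'' C where
    D: "\<And>x. x \<notin> \<int> \<Longrightarrow> ((\<lambda>y. real_of_ereal (W y)) has_real_derivative W' x) (at x)"
       "\<And>x. x \<notin> \<int> \<Longrightarrow> (W' has_real_derivative W'' x) (at x)"
    and C: "0 < C" "\<And>x. x \<notin> \<int> \<Longrightarrow> C \<le> W'' x"
    using W_hyps_second_derivative[OF assms] by blast
  define \<psi> where "\<psi> x = real_of_ereal (W x) - C / 2 * x\<^sup>2" for x
  have convex: "convex_on {0<..<1} \<psi>"
  proof (rule f''_ge0_imp_convex[where f' = "\<lambda>x. W' x - C * x" and f'' = "\<lambda>x. W'' x - C"])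
    fix x :: real
    assume "x \<in> {0<..<1}"
    then have x: "x \<notin> \<int>"
      using not_Ints_01 by auto
    show "(\<psi> has_real_derivative W' x - C * x) (at x)"
      unfolding \<psi>_def[abs_def] by (rule derivative_eq_intros D(1)[OF x] refl | simp)+
    show "((\<lambda>x. W' x - C * x) has_real_derivative W'' x - C) (at x)"
      by (rule derivative_eq_intros D(2)[OF x] refl | simp)+
    show "0 \<le> W'' x - C"
      using C(2)[OF x] by simp
  qed simp
  show ?thesis
  proof (rule that[OF C(1)])
    fix a u :: real
    assume a: "0 \<le> u" "0 < a - u" "a + u < 1"
    have "\<psi> ((1 - 1/2) *\<^sub>R (a - u) + (1/2) *\<^sub>R (a + u)) \<le> (1 - 1/2) * \<psi> (a - u) + (1/2) * \<psi> (a + u)"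
      by (rule convex_onD[OF convex]) (use a in auto)
    moreover have "(1 - 1/2) *\<^sub>R (a - u) + (1/2) *\<^sub>R (a + u) = a"
      by (simp add: field_simps)
    ultimately have "\<psi> a \<le> (\<psi> (a - u) + \<psi> (a + u)) / 2"
      by simp
    then show "2 * real_of_ereal (W a) + C * u\<^sup>2 \<le> real_of_ereal (W (a - u)) + real_of_ereal (W (a + u))"
      unfolding \<psi>_def by (simp add: power2_eq_square algebra_simps)
  qed
qed

locale W_kernel =
  fixes W :: "real \<Rightarrow> ereal" and B C :: real
  assumes W_hyps: "W_hyps W"
    and B_nonneg: "0 \<le> B"
    and W_ge: "- ereal B \<le> W x"
    and C_pos: "0 < C"
    and W_convex: "0 \<le> u \<Longrightarrow> 0 < a - u \<Longrightarrow> a + u < 1 \<Longrightarrow>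
       2 * real_of_ereal (W a) + C * u\<^sup>2 \<le> real_of_ereal (W (a - u)) + real_of_ereal (W (a + u))"

lemma W_kernel_exists:
  assumes "W_hyps W"
  obtains B C where "W_kernel W B C"
proof -
  obtain B where "0 \<le> B" "\<And>x. - ereal B \<le> W x"
    using W_bounded_below[OF assms] by blast
  moreover obtain C where "0 < C" "\<And>a u. 0 \<le> u \<Longrightarrow> 0 < a - u \<Longrightarrow> a + u < 1 \<Longrightarrow>
     2 * real_of_ereal (W a) + C * u\<^sup>2 \<le> real_of_ereal (W (a - u)) + real_of_ereal (W (a + u))"
    using W_uniformly_convex[OF assms] by blast
  ultimately show thesis
    using that assms by (blast intro: W_kernel.intro)
qed

section \<open>Measures on the torus\<close>

lemma torus_probD:
  assumes "torus_prob \<rho>"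
  shows "prob_space \<rho>" and "sets \<rho> = sets borel" and "emeasure \<rho> {0..<1} = 1"
  using assms by (simp_all add: torus_prob_def)

lemma ess_inf_T_ge:
  assumes "AE z in lborel. z \<in> {0..<1} \<longrightarrow> c \<le> f z"
  shows "c \<le> ess_inf_T f"
  unfolding ess_inf_T_def by (rule Sup_upper) (use assms in simp)

lemma AE_ess_inf_T_le:
  assumes "ess_inf_T f = ereal m"
  shows "AE z in lborel. z \<in> {0..<1} \<longrightarrow> ereal m \<le> f z"
proof -
  have "AE z in lborel. z \<in> {0..<1} \<longrightarrow> ereal (m - inverse (Suc n)) \<le> f z" for n :: nat
  proof -
    have "ereal (m - inverse (Suc n)) < ess_inf_T f"
      using assms by simp
    then obtain c where c: "AE z in lborel. z \<in> {0..<1} \<longrightarrow> c \<le> f z"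
      and lt: "ereal (m - inverse (Suc n)) < c"
      unfolding ess_inf_T_def less_Sup_iff by auto
    from c show ?thesis
      by eventually_elim (use lt in auto)
  qed
  then have "AE z in lborel. \<forall>n::nat. z \<in> {0..<1} \<longrightarrow> ereal (m - inverse (Suc n)) \<le> f z"
    unfolding AE_all_countable by blast
  moreover have lim: "(\<lambda>n::nat. ereal (m - inverse (Suc n))) \<longlonglongrightarrow> ereal m"
    using tendsto_ereal[OF tendsto_diff[OF tendsto_const LIMSEQ_inverse_real_of_nat, of m]] by simp
  ultimately show ?thesis
    by eventually_elim (use LIMSEQ_le_const2[OF lim] in blast)
qed

lemma arc_excess_le_DD:
  assumes "prob_space \<sigma>" "a \<le> b" "b - a \<le> 1"
  shows "measure \<sigma> (frac ` {a..b}) - (b - a) \<le> DD \<sigma>"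
proof -
  interpret prob_space \<sigma>
    by (rule assms(1))
  let ?f = "\<lambda>ab. measure \<sigma> (frac ` {fst ab..snd ab}) - (snd ab - fst ab)"
  have "bdd_above (?f ` {(a, b). a \<le> b \<and> b - a \<le> 1})"
  proof (rule bdd_aboveI2)
    fix ab :: "real \<times> real"
    assume "ab \<in> {(a, b). a \<le> b \<and> b - a \<le> 1}"
    then have "fst ab \<le> snd ab"
      by auto
    then show "?f ab \<le> 1"
      using prob_le_1[of "frac ` {fst ab..snd ab}"] by linarith
  qed
  then show ?thesis
    unfolding DD_def using cSUP_upper[of "(a, b)" _ ?f] assms(2,3) by simp
qed

lemma ereal_divide_less_divide:
  fixes a b :: ereal
  assumes "0 \<le> a" "a < b" "0 < P" "P \<le> Q"
  shows "a / ereal Q < b / ereal P"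
proof -
  obtain a' where a: "a = ereal a'" "0 \<le> a'"
    using assms(1,2) by (cases a) auto
  have "a' / Q \<le> a' / P"
    using a(2) assms(3,4) by (auto intro!: divide_left_mono)
  show ?thesis
  proof (cases b)
    case (real r)
    then have "a' / P < r / P"
      using assms a by (simp add: divide_strict_right_mono)
    then show ?thesis
      using \<open>a' / Q \<le> a' / P\<close> real a assms(3,4) by simp
  qed (use assms a in simp_all)
qed

section \<open>Periodic arcs and balls\<close>

definition periodic_arc :: "real \<Rightarrow> real set" where
  "periodic_arc M = {p. \<exists>k::int. \<bar>p - of_int k\<bar> \<le> M}"

lemma periodic_arc_add_of_int: "p + of_int j \<in> periodic_arc M \<longleftrightarrow> p \<in> periodic_arc M"
proof
  assume "p + of_int j \<in> periodic_arc M"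
  then obtain k :: int where "\<bar>p + of_int j - of_int k\<bar> \<le> M"
    unfolding periodic_arc_def by auto
  then have "\<bar>p - of_int (k - j)\<bar> \<le> M"
    by (simp add: algebra_simps)
  then show "p \<in> periodic_arc M"
    unfolding periodic_arc_def by blast
next
  assume "p \<in> periodic_arc M"
  then obtain k :: int where "\<bar>p - of_int k\<bar> \<le> M"
    unfolding periodic_arc_def by auto
  then have "\<bar>p + of_int j - of_int (k + j)\<bar> \<le> M"
    by (simp add: algebra_simps)
  then show "p + of_int j \<in> periodic_arc M"
    unfolding periodic_arc_def by blast
qed

lemma frac_in_periodic_arc: "frac p \<in> periodic_arc M \<longleftrightarrow> p \<in> periodic_arc M"
  using periodic_arc_add_of_int[of p "- floor p" M] by (simp add: frac_def)

lemma frac_image_arc: "frac ` {-M..M} = periodic_arc M \<inter> {0..<1}"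
proof
  show "frac ` {-M..M} \<subseteq> periodic_arc M \<inter> {0..<1}"
  proof
    fix p
    assume "p \<in> frac ` {-M..M}"
    then obtain x where x: "x \<in> {-M..M}" "p = frac x"
      by auto
    then have "x \<in> periodic_arc M"
      unfolding periodic_arc_def by (intro CollectI exI[of _ 0]) auto
    then show "p \<in> periodic_arc M \<inter> {0..<1}"
      using x frac_in_periodic_arc by (simp add: frac_lt_1)
  qed
  show "periodic_arc M \<inter> {0..<1} \<subseteq> frac ` {-M..M}"
  proof
    fix p
    assume p: "p \<in> periodic_arc M \<inter> {0..<1}"
    then obtain k :: int where k: "\<bar>p - of_int k\<bar> \<le> M"
      unfolding periodic_arc_def by auto
    have "p = frac (p - of_int k)"
      using p by (simp add: frac_def floor_diff_of_int floor_eq_iff)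
    moreover have "p - of_int k \<in> {-M..M}"
      using k by auto
    ultimately show "p \<in> frac ` {-M..M}"
      by blast
  qed
qed

lemma frac_image_arc_borel[measurable]: "frac ` {-M..M::real} \<in> sets borel"
proof -
  have "periodic_arc M = (\<Union>k::int. {of_int k - M .. of_int k + M})"
    unfolding periodic_arc_def by (auto simp: abs_le_iff algebra_simps)
  then have "periodic_arc M \<in> sets borel"
    by simp
  then show ?thesis
    unfolding frac_image_arc by simp
qed

lemma periodic_arc_interior:
  assumes "x0 \<in> periodic_arc M" "0 \<le> x0" "x0 < 1" "x0 \<noteq> frac M" "x0 \<noteq> frac (- M)"
  obtains \<eta> where "0 < \<eta>" "\<And>w. \<bar>w\<bar> < \<eta> \<Longrightarrow> x0 + w \<in> periodic_arc M"
proof -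
  obtain k :: int where k: "\<bar>x0 - of_int k\<bar> \<le> M"
    using assms(1) unfolding periodic_arc_def by auto
  have "frac (x0 - of_int k) = x0"
    using assms(2,3) by (simp add: frac_def floor_diff_of_int floor_eq_iff)
  then have "x0 - of_int k \<noteq> M" "x0 - of_int k \<noteq> - M"
    using assms(4,5) by auto
  then have "0 < M - \<bar>x0 - of_int k\<bar>"
    using k by linarith
  moreover have "x0 + w \<in> periodic_arc M" if "\<bar>w\<bar> < M - \<bar>x0 - of_int k\<bar>" for w
  proof -
    have "\<bar>x0 + w - of_int k\<bar> \<le> M"
      using that by linarith
    then show ?thesis
      unfolding periodic_arc_def by blast
  qed
  ultimately show thesis
    by (rule that)
qed

lemma periodic_arc_exterior:
  assumes "x0 \<notin> periodic_arc M" "0 \<le> x0" "x0 < 1"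
  obtains \<eta> where "0 < \<eta>" "\<And>w. \<bar>w\<bar> < \<eta> \<Longrightarrow> x0 + w \<notin> periodic_arc M"
proof -
  have far: "M < \<bar>x0 - of_int k\<bar>" for k :: int
    using assms(1) unfolding periodic_arc_def by (auto simp: not_le)
  have "M < x0" "M < 1 - x0"
    using far[of 0] far[of 1] assms(2,3) by simp_all
  then have "0 < min (x0 - M) (1 - x0 - M)"
    by simp
  moreover have "x0 + w \<notin> periodic_arc M" if w: "\<bar>w\<bar> < min (x0 - M) (1 - x0 - M)" for w
  proof
    assume "x0 + w \<in> periodic_arc M"
    then obtain k :: int where k: "\<bar>x0 + w - of_int k\<bar> \<le> M"
      unfolding periodic_arc_def by auto
    have "(of_int k :: real) \<le> 0 \<or> 1 \<le> (of_int k :: real)"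
      by (cases "k \<le> 0") simp_all
    then show False
      using k w by linarith
  qed
  ultimately show thesis
    by (rule that)
qed

lemma periodic_arc_locally_constant:
  assumes "0 \<le> x0" "x0 < 1" "x0 \<noteq> frac M" "x0 \<noteq> frac (- M)"
  obtains \<eta> where "0 < \<eta>" "\<And>w. \<bar>w\<bar> < \<eta> \<Longrightarrow> x0 + w \<in> periodic_arc M \<longleftrightarrow> x0 \<in> periodic_arc M"
proof (cases "x0 \<in> periodic_arc M")
  case True
  then obtain \<eta> where "0 < \<eta>" "\<And>w. \<bar>w\<bar> < \<eta> \<Longrightarrow> x0 + w \<in> periodic_arc M"
    using periodic_arc_interior[OF True assms] by blast
  with True show thesis
    using that by blast
next
  case False
  then obtain \<eta> where "0 < \<eta>" "\<And>w. \<bar>w\<bar> < \<eta> \<Longrightarrow> x0 + w \<notin> periodic_arc M"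
    using periodic_arc_exterior[OF False assms(1,2)] by blast
  with False show thesis
    using that by blast
qed

definition periodic_ball :: "real \<Rightarrow> real \<Rightarrow> real set" where
  "periodic_ball x0 \<epsilon> = (\<Union>k::int. ball (x0 + of_int k) \<epsilon>)"

lemma periodic_ball_borel[measurable]: "periodic_ball x0 \<epsilon> \<in> sets borel"
  unfolding periodic_ball_def by (rule borel_open) auto

lemma frac_image_ball_subset: "frac ` ball x0 \<epsilon> \<subseteq> periodic_ball x0 \<epsilon>"
proof
  fix y
  assume "y \<in> frac ` ball x0 \<epsilon>"
  then obtain p where p: "dist x0 p < \<epsilon>" "y = frac p"
    by auto
  then have "y \<in> ball (x0 + of_int (- floor p)) \<epsilon>"
    unfolding frac_def mem_ball dist_real_def by (simp add: algebra_simps)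
  then show "y \<in> periodic_ball x0 \<epsilon>"
    unfolding periodic_ball_def by (rule UN_I[OF UNIV_I])
qed

lemma measure_periodic_ball_pos:
  assumes \<rho>: "torus_prob \<rho>" and "x0 \<in> supp_T \<rho>" "0 < \<epsilon>"
  shows "0 < measure \<rho> (periodic_ball x0 \<epsilon>)"
proof -
  interpret prob_space \<rho>
    using torus_probD(1)[OF \<rho>] .
  have "0 < emeasure \<rho> (frac ` ball x0 \<epsilon>)"
    using assms(2,3) by (simp add: supp_T_def)
  also have "\<dots> \<le> emeasure \<rho> (periodic_ball x0 \<epsilon>)"
    by (rule emeasure_mono[OF frac_image_ball_subset]) (simp add: torus_probD(2)[OF \<rho>])
  finally show ?thesis
    by (simp add: emeasure_eq_measure)
qed

lemma frac_shift_in_arc: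
  assumes y: "y \<in> frac ` {-M..M}" "y \<in> periodic_ball x0 \<epsilon>" and "\<bar>s\<bar> \<le> \<epsilon>"
    and const: "\<And>w. \<bar>w\<bar> < 2 * \<epsilon> \<Longrightarrow> x0 + w \<in> periodic_arc M \<longleftrightarrow> x0 \<in> periodic_arc M"
  shows "frac (y + s) \<in> frac ` {-M..M}"
proof -
  obtain k :: int where k: "dist (x0 + of_int k) y < \<epsilon>"
    using y(2) unfolding periodic_ball_def UN_iff mem_ball by blast
  define v where "v = y - x0 - of_int k"
  have v: "\<bar>v\<bar> < \<epsilon>"
    using k by (simp add: v_def dist_real_def abs_minus_commute algebra_simps)
  have "y \<in> periodic_arc M"
    using y(1) frac_image_arc by auto
  then have "x0 + v \<in> periodic_arc M"
    using periodic_arc_add_of_int[of "x0 + v" k M] by (simp add: v_def)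
  then have "x0 + (v + s) \<in> periodic_arc M"
    using const[of v] const[of "v + s"] v \<open>\<bar>s\<bar> \<le> \<epsilon>\<close> by auto
  then have "y + s \<in> periodic_arc M"
    using periodic_arc_add_of_int[of "x0 + (v + s)" k M] by (simp add: v_def algebra_simps)
  then show ?thesis
    unfolding frac_image_arc by (simp add: frac_in_periodic_arc frac_lt_1)
qed

section \<open>Spreading mass\<close>

lemma borel_measurable_frac[measurable]: "frac \<in> borel_measurable (borel :: real measure)"
  unfolding frac_def[abs_def] using borel_measurable_real_floor by measurable

definition shift_on :: "real set \<Rightarrow> real \<Rightarrow> real \<Rightarrow> real" where
  "shift_on U s y = frac (y + (if y \<in> U then s else 0))"

definition unit_uniform :: "real measure" where
  "unit_uniform = uniform_measure lborel {0..1}"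

text \<open>The mixture (1 - t) rho + t/2 (rho moved by eps on U) + t/2 (rho moved by -eps on U),
  realised as an image of rho times the uniform distribution on [0, 1].\<close>

definition spread_map :: "real set \<Rightarrow> real \<Rightarrow> real \<Rightarrow> real \<times> real \<Rightarrow> real" where
  "spread_map U \<epsilon> t = (\<lambda>(y, s). shift_on U (if s < t/2 then \<epsilon> else if s < t then - \<epsilon> else 0) y)"

definition spread :: "real measure \<Rightarrow> real set \<Rightarrow> real \<Rightarrow> real \<Rightarrow> real measure" where
  "spread \<rho> U \<epsilon> t = distr (\<rho> \<Otimes>\<^sub>M unit_uniform) borel (spread_map U \<epsilon> t)"

lemma prob_space_unit_uniform: "prob_space unit_uniform"
  unfolding unit_uniform_def by (rule prob_space_uniform_measure) auto

lemma sets_unit_uniform[measurable_cong]: "sets unit_uniform = sets borel"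
  unfolding unit_uniform_def by simp

lemma nn_integral_unit_uniform_step:
  fixes a b c :: ennreal
  assumes t: "0 < t" "t < 1"
  shows "(\<integral>\<^sup>+ s. (if s < t/2 then a else if s < t then b else c) \<partial>unit_uniform)
     = ennreal (t/2) * a + ennreal (t/2) * b + ennreal (1 - t) * c"
proof -
  have "(\<integral>\<^sup>+ s. (if s < t/2 then a else if s < t then b else c) \<partial>unit_uniform)
      = (\<integral>\<^sup>+ s. (if s < t/2 then a else if s < t then b else c) * indicator {0..1} s \<partial>lborel)"
    unfolding unit_uniform_def by (subst nn_integral_uniform_measure) (simp_all add: divide_ennreal_def)
  also have "\<dots> = (\<integral>\<^sup>+ s. a * indicator {0..<t/2} s + b * indicator {t/2..<t} s + c * indicator {t..1} s \<partial>lborel)"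
    by (rule nn_integral_cong) (use t in \<open>auto simp: indicator_def\<close>)
  also have "\<dots> = a * ennreal (t/2) + b * ennreal (t/2) + c * ennreal (1 - t)"
    using t by (simp add: nn_integral_add nn_integral_cmult_indicator)
  finally show ?thesis
    by (simp add: mult.commute)
qed

lemma measurable_spread_map:
  assumes [measurable]: "U \<in> sets borel" and "sets \<rho> = sets borel"
  shows "spread_map U \<epsilon> t \<in> borel_measurable (\<rho> \<Otimes>\<^sub>M unit_uniform)"
  by (subst measurable_cong_sets[OF sets_pair_measure_cong[OF assms(2) sets_unit_uniform] refl])
    (unfold spread_map_def shift_on_def, measurable)

lemma spread_torus_prob:
  assumes \<rho>: "torus_prob \<rho>" and U: "U \<in> sets borel"
  shows "torus_prob (spread \<rho> U \<epsilon> t)"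
proof -
  interpret \<rho>: prob_space \<rho>
    using torus_probD(1)[OF \<rho>] .
  interpret pair: prob_space "\<rho> \<Otimes>\<^sub>M unit_uniform"
    by (intro prob_space_pair \<rho>.prob_space_axioms prob_space_unit_uniform)
  note meas = measurable_spread_map[OF U torus_probD(2)[OF \<rho>], of \<epsilon> t]
  have "emeasure (spread \<rho> U \<epsilon> t) {0..<1} = 1"
    unfolding spread_def using meas
    by (subst emeasure_distr) (auto simp: spread_map_def shift_on_def frac_lt_1 pair.emeasure_space_1[symmetric]
        intro!: arg_cong[where f = "emeasure _"])
  then show ?thesis
    unfolding torus_prob_def spread_def using pair.prob_space_distr[OF meas] by simp
qed

lemma nn_integral_spread:
  assumes \<rho>: "torus_prob \<rho>" and [measurable]: "U \<in> sets borel" and t: "0 < t" "t < 1"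
    and [measurable]: "h \<in> borel_measurable borel"
  shows "(\<integral>\<^sup>+ x. h x \<partial>spread \<rho> U \<epsilon> t) = (\<integral>\<^sup>+ y. ennreal (t/2) * h (shift_on U \<epsilon> y)
     + ennreal (t/2) * h (shift_on U (- \<epsilon>) y) + ennreal (1 - t) * h (frac y) \<partial>\<rho>)"
proof -
  interpret prob_space unit_uniform
    by (rule prob_space_unit_uniform)
  note meas = measurable_spread_map[OF _ torus_probD(2)[OF \<rho>], of U \<epsilon> t]
  have "(\<integral>\<^sup>+ x. h x \<partial>spread \<rho> U \<epsilon> t) = (\<integral>\<^sup>+ p. h (spread_map U \<epsilon> t p) \<partial>(\<rho> \<Otimes>\<^sub>M unit_uniform))"
    unfolding spread_def using meas by (rule nn_integral_distr) measurable
  also have "\<dots> = (\<integral>\<^sup>+ y. \<integral>\<^sup>+ s. h (spread_map U \<epsilon> t (y, s)) \<partial>unit_uniform \<partial>\<rho>)"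
    by (rule nn_integral_fst[symmetric]) (use meas in measurable)
  also have "\<dots> = (\<integral>\<^sup>+ y. ennreal (t/2) * h (shift_on U \<epsilon> y)
     + ennreal (t/2) * h (shift_on U (- \<epsilon>) y) + ennreal (1 - t) * h (frac y) \<partial>\<rho>)"
  proof (rule nn_integral_cong)
    fix y
    have "(\<lambda>s. h (spread_map U \<epsilon> t (y, s)))
      = (\<lambda>s. if s < t/2 then h (shift_on U \<epsilon> y) else if s < t then h (shift_on U (- \<epsilon>) y) else h (frac y))"
      by (auto simp: fun_eq_iff spread_map_def shift_on_def)
    then show "(\<integral>\<^sup>+ s. h (spread_map U \<epsilon> t (y, s)) \<partial>unit_uniform)
      = ennreal (t/2) * h (shift_on U \<epsilon> y) + ennreal (t/2) * h (shift_on U (- \<epsilon>) y) + ennreal (1 - t) * h (frac y)"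
      using nn_integral_unit_uniform_step[OF t] by simp
  qed
  finally show ?thesis .
qed

lemma ennreal_convex_comb_same:
  assumes "0 \<le> t" "t \<le> 1"
  shows "ennreal (t/2) * h + ennreal (t/2) * h + ennreal (1 - t) * h = h"
proof -
  have "ennreal (t/2) + ennreal (t/2) + ennreal (1 - t) = ennreal (t/2 + t/2 + (1 - t))"
    using assms by (simp add: ennreal_plus[symmetric] del: ennreal_plus)
  then show ?thesis
    by (simp flip: distrib_right)
qed

lemma measure_spread_ge:
  assumes \<rho>: "torus_prob \<rho>" and [measurable]: "U \<in> sets borel" "A \<in> sets borel"
    and t: "0 < t" "t < 1"
    and stays: "\<And>y. y \<in> A \<Longrightarrow> y \<in> U \<Longrightarrow> y \<in> {0..<1} \<Longrightarrow> frac (y + \<epsilon>) \<in> A \<and> frac (y - \<epsilon>) \<in> A"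
  shows "measure \<rho> A \<le> measure (spread \<rho> U \<epsilon> t) A"
proof -
  interpret \<rho>: prob_space \<rho>
    using torus_probD(1)[OF \<rho>] .
  interpret \<sigma>: prob_space "spread \<rho> U \<epsilon> t"
    using torus_probD(1)[OF spread_torus_prob[OF \<rho>]] by simp
  have "AE y in \<rho>. y \<in> {0..<1}"
    by (rule \<rho>.AE_prob_1) (simp add: measure_def torus_probD(3)[OF \<rho>])
  then have "AE y in \<rho>. indicator A y \<le> ennreal (t/2) * indicator A (shift_on U \<epsilon> y)
      + ennreal (t/2) * indicator A (shift_on U (- \<epsilon>) y) + ennreal (1 - t) * (indicator A (frac y) :: ennreal)"
  proof eventually_elim
    case (elim y)
    show ?case
    proof (cases "y \<in> A")
      case True
      then have "shift_on U s y \<in> A" if "s = \<epsilon> \<or> s = - \<epsilon>" for s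
        using stays[OF True _ elim] that elim by (auto simp: shift_on_def)
      then show ?thesis
        using True elim ennreal_convex_comb_same[of t 1] t by simp
    qed simp
  qed
  then have "(\<integral>\<^sup>+ y. indicator A y \<partial>\<rho>) \<le> (\<integral>\<^sup>+ x. indicator A x \<partial>spread \<rho> U \<epsilon> t)"
    by (subst nn_integral_spread[OF \<rho> _ t]) (simp_all add: nn_integral_mono_AE)
  then have "emeasure \<rho> A \<le> emeasure (spread \<rho> U \<epsilon> t) A"
    using torus_probD(2)[OF \<rho>] by (simp add: spread_def)
  then show ?thesis
    by (simp add: \<rho>.emeasure_eq_measure \<sigma>.emeasure_eq_measure)
qed

lemma DD_spread_ge:
  assumes \<rho>: "torus_prob \<rho>" and D: "DD \<rho> = measure \<rho> (frac ` {-M..M}) - 2 * M"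
    and M: "0 \<le> M" "2 * M \<le> 1" and t: "0 < t" "t < 1" and "0 < \<epsilon>"
    and const: "\<And>w. \<bar>w\<bar> < 2 * \<epsilon> \<Longrightarrow> x0 + w \<in> periodic_arc M \<longleftrightarrow> x0 \<in> periodic_arc M"
  shows "DD \<rho> \<le> DD (spread \<rho> (periodic_ball x0 \<epsilon>) \<epsilon> t)"
proof -
  let ?\<sigma> = "spread \<rho> (periodic_ball x0 \<epsilon>) \<epsilon> t"
  have stays: "frac (y + s) \<in> frac ` {-M..M}"
    if "y \<in> frac ` {-M..M}" "y \<in> periodic_ball x0 \<epsilon>" "\<bar>s\<bar> \<le> \<epsilon>" for y s
    using that const by (rule frac_shift_in_arc)
  have "measure \<rho> (frac ` {-M..M}) \<le> measure ?\<sigma> (frac ` {-M..M})"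
    using stays[of _ \<epsilon>] stays[of _ "- \<epsilon>"] \<open>0 < \<epsilon>\<close> by (intro measure_spread_ge[OF \<rho> _ _ t]) auto
  moreover have "measure ?\<sigma> (frac ` {-M..M}) - (M - - M) \<le> DD ?\<sigma>"
    by (rule arc_excess_le_DD[OF torus_probD(1)[OF spread_torus_prob[OF \<rho>]]]) (use M in simp_all)
  ultimately show ?thesis
    using D by linarith
qed

section \<open>The potential\<close>

lemma measurable_translate_reflect:
  fixes z :: real
  assumes "sets \<rho> = sets borel" and [measurable]: "f \<in> borel_measurable borel"
  shows "(\<lambda>y. f (z - y)) \<in> borel_measurable \<rho>"
  by (subst measurable_cong_sets[OF assms(1) refl]) measurable

lemma e2ennreal_add_shift:
  assumes "- ereal B \<le> w" "0 \<le> B"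
  shows "e2ennreal (w + ereal B) + e2ennreal (- w) = e2ennreal w + ennreal B"
proof (cases w)
  case (real r)
  then have r: "- B \<le> r"
    using assms by simp
  show ?thesis
  proof (cases "0 \<le> r")
    case True
    have "ennreal (r + B) = ennreal r + ennreal B"
      using True assms(2) by (rule ennreal_plus)
    moreover have "ennreal (- r) = 0"
      using True by (simp add: ennreal_eq_0_iff)
    ultimately show ?thesis
      using real by simp
  next
    case False
    have "ennreal (r + B) + ennreal (- r) = ennreal B"
      using r False by (subst ennreal_plus[symmetric]) auto
    moreover have "ennreal r = 0"
      using False by (intro ennreal_neg) simp
    ultimately show ?thesis
      using real by simp
  qed
qed (use assms in simp_all)

lemma ereal_add_eq_imp_diff_eq:
  fixes a p :: ereal
  assumes "a + ereal n = p + ereal b"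
  shows "a - ereal b = p - ereal n"
  using assms by (cases a; cases p) simp_all

lemma
  fixes G :: ennreal
  assumes "0 \<le> c + B"
  shows ereal_le_enn2ereal_minus_iff: "ereal c \<le> enn2ereal G - ereal B \<longleftrightarrow> ennreal (c + B) \<le> G"
    and ereal_less_enn2ereal_minus_iff: "ereal c < enn2ereal G - ereal B \<longleftrightarrow> ennreal (c + B) < G"
  using assms by (cases G; simp add: ennreal_le_iff ennreal_less_iff le_diff_eq less_diff_eq)+

lemma nn_integral_lborel_shift:
  fixes f :: "real \<Rightarrow> ennreal"
  assumes "f \<in> borel_measurable borel"
  shows "(\<integral>\<^sup>+ z. f z \<partial>lborel) = (\<integral>\<^sup>+ z. f (c + z) \<partial>lborel)"
  using nn_integral_real_affine[OF assms, of 1 c] by simp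

lemma nn_integral_periodic_unit:
  fixes h :: "real \<Rightarrow> ennreal"
  assumes [measurable]: "h \<in> borel_measurable borel" and per: "\<And>x. h (x + 1) = h x"
  shows "(\<integral>\<^sup>+ z. h z * indicator {a..<a+1} z \<partial>lborel) = (\<integral>\<^sup>+ z. h z * indicator {0..<1} z \<partial>lborel)"
proof -
  interpret h: periodic_fun_simple' h
    by standard (rule per)
  define b where "b = a - of_int (floor a)"
  have b: "0 \<le> b" "b < 1"
    unfolding b_def by linarith+
  have "(\<integral>\<^sup>+ z. h z * indicator {a..<a+1} z \<partial>lborel)
      = (\<integral>\<^sup>+ z. h (of_int (floor a) + z) * indicator {a..<a+1} (of_int (floor a) + z) \<partial>lborel)"
    by (rule nn_integral_lborel_shift) measurable
  also have "\<dots> = (\<integral>\<^sup>+ z. h z * indicator {b..<b+1} z \<partial>lborel)"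
    by (intro nn_integral_cong) (auto simp: b_def indicator_def h.plus_of_int add.commute)
  also have "\<dots> = (\<integral>\<^sup>+ z. h z * indicator {b..<1} z + h z * indicator {1..<b+1} z \<partial>lborel)"
    using b by (intro nn_integral_cong) (auto simp: indicator_def)
  also have "\<dots> = (\<integral>\<^sup>+ z. h z * indicator {b..<1} z \<partial>lborel) + (\<integral>\<^sup>+ z. h z * indicator {1..<b+1} z \<partial>lborel)"
    by (rule nn_integral_add) auto
  also have "(\<integral>\<^sup>+ z. h z * indicator {1..<b+1} z \<partial>lborel) = (\<integral>\<^sup>+ z. h (1 + z) * indicator {1..<b+1} (1 + z) \<partial>lborel)"
    by (rule nn_integral_lborel_shift) measurable
  also have "\<dots> = (\<integral>\<^sup>+ z. h z * indicator {0..<b} z \<partial>lborel)"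
    by (intro nn_integral_cong) (auto simp: indicator_def add.commute per)
  also have "(\<integral>\<^sup>+ z. h z * indicator {b..<1} z \<partial>lborel) + (\<integral>\<^sup>+ z. h z * indicator {0..<b} z \<partial>lborel)
      = (\<integral>\<^sup>+ z. h z * indicator {0..<1} z \<partial>lborel)"
    using b by (subst nn_integral_add[symmetric]) (auto simp: indicator_def intro!: nn_integral_cong)
  finally show ?thesis .
qed

lemma frac_outside_imp_near_Ints:
  assumes "\<not> (r \<le> frac x \<and> frac x \<le> 1 - r)"
  obtains w where "\<bar>w\<bar> < r" "x - w \<in> \<int>"
proof (cases "frac x < r")
  case True
  then show thesis
    using that[of "frac x"] by (simp add: frac_def)
next
  case False
  then have "\<bar>frac x - 1\<bar> < r"
    using assms frac_lt_1[of x] by auto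
  moreover have "x - (frac x - 1) = of_int (floor x + 1)"
    by (simp add: frac_def)
  then have "x - (frac x - 1) \<in> \<int>"
    by (metis Ints_of_int)
  ultimately show thesis
    by (rule that)
qed

context W_kernel
begin

definition Wplus :: "real \<Rightarrow> ennreal" where
  "Wplus x = e2ennreal (W x + ereal B)"

definition potential :: "real measure \<Rightarrow> real \<Rightarrow> ennreal" where
  "potential \<rho> z = (\<integral>\<^sup>+ y. Wplus (z - y) \<partial>\<rho>)"

lemma W_measurable[measurable]: "W \<in> borel_measurable borel"
  using isCont_W[OF W_hyps]
  by (intro borel_measurable_continuous_onI continuous_at_imp_continuous_on) simp

lemma isCont_Wplus: "isCont Wplus x"
  using isCont_W[OF W_hyps, of x] unfolding Wplus_def isCont_def
  by (intro tendsto_e2ennrealI tendsto_add_ereal_general) auto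

lemma Wplus_measurable[measurable]: "Wplus \<in> borel_measurable borel"
  using isCont_Wplus
  by (intro borel_measurable_continuous_onI continuous_at_imp_continuous_on) simp

lemma Wplus_periodic: "x - x' \<in> \<int> \<Longrightarrow> Wplus x = Wplus x'"
  unfolding Wplus_def using W_periodic[OF W_hyps] by metis

lemma Wplus_diff_frac: "Wplus (z - frac x) = Wplus (z - x)"
  by (rule Wplus_periodic) (simp add: frac_def)

lemma real_W_plus_B_nonneg: "0 \<le> real_of_ereal (W x) + B"
  using W_ge[of x] B_nonneg by (cases "W x") auto

lemma Wplus_eq: "x \<notin> \<int> \<Longrightarrow> Wplus x = ennreal (real_of_ereal (W x) + B)"
  unfolding Wplus_def using W_real[OF W_hyps, of x] by (metis e2ennreal_ereal plus_ereal.simps(1))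

lemma potential_periodic: "z - z' \<in> \<int> \<Longrightarrow> potential \<rho> z = potential \<rho> z'"
  unfolding potential_def by (intro nn_integral_cong Wplus_periodic) simp

lemma conv_eq_potential:
  assumes \<rho>: "torus_prob \<rho>"
  shows "conv W \<rho> z = enn2ereal (potential \<rho> z) - ereal B"
proof -
  interpret prob_space \<rho>
    using torus_probD(1)[OF \<rho>] .
  note translate_meas = measurable_translate_reflect[OF torus_probD(2)[OF \<rho>]]
  define P N where "P = (\<integral>\<^sup>+ y. e2ennreal (W (z - y)) \<partial>\<rho>)"
    and "N = (\<integral>\<^sup>+ y. e2ennreal (- W (z - y)) \<partial>\<rho>)"
  have "potential \<rho> z + N = (\<integral>\<^sup>+ y. Wplus (z - y) + e2ennreal (- W (z - y)) \<partial>\<rho>)"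
    unfolding potential_def N_def
    by (rule nn_integral_add[symmetric]; rule translate_meas; measurable)
  also have "\<dots> = (\<integral>\<^sup>+ y. e2ennreal (W (z - y)) + ennreal B \<partial>\<rho>)"
    unfolding Wplus_def using W_ge B_nonneg by (simp add: e2ennreal_add_shift)
  also have "\<dots> = P + ennreal B"
    unfolding P_def by (subst nn_integral_add) (rule translate_meas, measurable, measurable, simp add: emeasure_space_1)
  finally have sum: "potential \<rho> z + N = P + ennreal B" .
  have "N \<le> (\<integral>\<^sup>+ y. ennreal B \<partial>\<rho>)"
    unfolding N_def
  proof (rule nn_integral_mono)
    fix y
    have "- W (z - y) \<le> ereal B"
      using W_ge[of "z - y"] by (simp add: ereal_uminus_le_reorder)
    then show "e2ennreal (- W (z - y)) \<le> ennreal B"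
      using e2ennreal_mono by fastforce
  qed
  then obtain n where n: "N = ennreal n" "0 \<le> n"
    by (cases N) (auto simp: emeasure_space_1 top_unique)
  have "enn2ereal (potential \<rho> z) + ereal n = enn2ereal P + ereal B"
    using arg_cong[OF sum, of enn2ereal] n B_nonneg by (simp add: plus_ennreal.rep_eq)
  then have "enn2ereal (potential \<rho> z) - ereal B = enn2ereal P - ereal n"
    by (rule ereal_add_eq_imp_diff_eq)
  then show ?thesis
    unfolding conv_def P_def[symmetric] N_def[symmetric] n(1) using n(2) by simp
qed

lemma
  assumes "torus_prob \<rho>" "0 \<le> c + B"
  shows conv_ge_iff: "ereal c \<le> conv W \<rho> z \<longleftrightarrow> ennreal (c + B) \<le> potential \<rho> z"
    and conv_gt_iff: "ereal c < conv W \<rho> z \<longleftrightarrow> ennreal (c + B) < potential \<rho> z"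
  using assms by (simp_all add: conv_eq_potential ereal_le_enn2ereal_minus_iff ereal_less_enn2ereal_minus_iff)

lemma conv_ge_minus_B: "torus_prob \<rho> \<Longrightarrow> ereal (- B) \<le> conv W \<rho> z"
  using conv_ge_iff[of \<rho> "- B" z] by simp

lemma eventually_less_potential:
  assumes "sets \<rho> = sets borel" "c < potential \<rho> x"
  shows "eventually (\<lambda>x'. c < potential \<rho> x') (nhds x)"
proof -
  have "eventually (\<lambda>n. c < potential \<rho> (f n)) sequentially" if f: "f \<longlonglongrightarrow> x" for f
  proof -
    have "liminf (\<lambda>n. Wplus (f n - y)) = Wplus (x - y)" for y
      by (rule lim_imp_Liminf) (simp_all add: isCont_tendsto_compose[OF isCont_Wplus tendsto_diff[OF f tendsto_const]])
    then have "potential \<rho> x = (\<integral>\<^sup>+ y. liminf (\<lambda>n. Wplus (f n - y)) \<partial>\<rho>)"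
      unfolding potential_def by simp
    also have "\<dots> \<le> liminf (\<lambda>n. potential \<rho> (f n))"
      unfolding potential_def by (rule nn_integral_liminf) (rule measurable_translate_reflect[OF assms(1) Wplus_measurable])
    finally have "potential \<rho> x \<le> liminf (\<lambda>n. potential \<rho> (f n))" .
    with assms(2) have "c < liminf (\<lambda>n. potential \<rho> (f n))"
      by (rule order.strict_trans2)
    then show ?thesis
      by (rule less_LiminfD)
  qed
  then show ?thesis
    using sequentially_imp_eventually_nhds_within[of UNIV x] by simp
qed

lemma nn_integral_Wplus_unit: "(\<integral>\<^sup>+ z. Wplus z * indicator {0..<1} z \<partial>lborel) = ennreal B"
proof -
  define f where "f z = indicator {0..1} z *\<^sub>R real_of_ereal (W z) + B * indicator {0..1} z" for z :: real
  have int_W: "integrable lborel (\<lambda>z. indicator {0..1} z *\<^sub>R real_of_ereal (W z))"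
    using W_hyps_integrable[OF W_hyps] by (simp add: set_integrable_def)
  have int_B: "integrable lborel (\<lambda>z. B * indicator {0..1::real} z)"
    by (intro integrable_mult_right integrable_real_indicator) auto
  have int: "integrable lborel f"
    unfolding f_def by (rule Bochner_Integration.integrable_add[OF int_W int_B])
  have nonneg: "0 \<le> f z" for z
    by (simp add: f_def indicator_def real_W_plus_B_nonneg)
  have "(\<integral>\<^sup>+ z. Wplus z * indicator {0..<1} z \<partial>lborel) = (\<integral>\<^sup>+ z. ennreal (f z) \<partial>lborel)"
  proof (rule nn_integral_cong_AE)
    have "AE z in lborel. z \<noteq> 0" "AE z in lborel. z \<noteq> 1"
      by (rule AE_lborel_singleton)+
    then show "AE z in lborel. Wplus z * indicator {0..<1} z = ennreal (f z)"
    proof eventually_elim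
      case (elim z)
      show ?case
      proof (cases "0 < z \<and> z < 1")
        case True
        then show ?thesis
          using Wplus_eq[OF not_Ints_01] by (simp add: f_def indicator_def)
      qed (use elim in \<open>auto simp: f_def indicator_def\<close>)
    qed
  qed
  also have "\<dots> = ennreal (\<integral> z. f z \<partial>lborel)"
    using int nonneg by (intro nn_integral_eq_integral AE_I2)
  also have "(\<integral> z. f z \<partial>lborel) = B"
    using W_hyps_integral[OF W_hyps] unfolding f_def set_lebesgue_integral_def
    by (subst Bochner_Integration.integral_add[OF int_W int_B]) simp
  finally show ?thesis .
qed

lemma nn_integral_potential_unit:
  assumes \<rho>: "torus_prob \<rho>"
  shows "(\<integral>\<^sup>+ z. potential \<rho> z * indicator {0..<1} z \<partial>lborel) = ennreal B"
proof -
  interpret \<rho>: prob_space \<rho>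
    using torus_probD(1)[OF \<rho>] .
  interpret pair_sigma_finite lborel \<rho> ..
  have pair_sets: "sets (lborel \<Otimes>\<^sub>M \<rho>) = sets (borel \<Otimes>\<^sub>M borel)"
    by (rule sets_pair_measure_cong) (simp_all add: torus_probD(2)[OF \<rho>])
  have "(\<lambda>(z, y). Wplus (z - y) * indicator {0..<1} z) \<in> borel_measurable (borel \<Otimes>\<^sub>M borel)"
    by measurable
  then have meas: "(\<lambda>(z, y). Wplus (z - y) * indicator {0..<1} z) \<in> borel_measurable (lborel \<Otimes>\<^sub>M \<rho>)"
    by (subst measurable_cong_sets[OF pair_sets refl])
  have "(\<integral>\<^sup>+ z. potential \<rho> z * indicator {0..<1} z \<partial>lborel)
      = (\<integral>\<^sup>+ z. (\<integral>\<^sup>+ y. Wplus (z - y) * indicator {0..<1} z \<partial>\<rho>) \<partial>lborel)"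
    unfolding potential_def
    by (intro nn_integral_cong nn_integral_multc[symmetric]
        measurable_translate_reflect[OF torus_probD(2)[OF \<rho>] Wplus_measurable])
  also have "\<dots> = (\<integral>\<^sup>+ y. (\<integral>\<^sup>+ z. Wplus (z - y) * indicator {0..<1} z \<partial>lborel) \<partial>\<rho>)"
    using Fubini'[OF meas] by simp
  also have "\<dots> = (\<integral>\<^sup>+ y. ennreal B \<partial>\<rho>)"
  proof (rule nn_integral_cong)
    fix y :: real
    have "(\<integral>\<^sup>+ z. Wplus (z - y) * indicator {0..<1} z \<partial>lborel)
        = (\<integral>\<^sup>+ v. Wplus v * indicator {-y..<-y+1} v \<partial>lborel)"
      by (subst nn_integral_lborel_shift[where c = "- y"]) (auto simp: indicator_def)
    also have "\<dots> = (\<integral>\<^sup>+ v. Wplus v * indicator {0..<1} v \<partial>lborel)"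
      by (rule nn_integral_periodic_unit) (simp_all add: Wplus_periodic)
    finally show "(\<integral>\<^sup>+ z. Wplus (z - y) * indicator {0..<1} z \<partial>lborel) = ennreal B"
      using nn_integral_Wplus_unit by simp
  qed
  also have "\<dots> = ennreal B"
    by (simp add: \<rho>.emeasure_space_1)
  finally show ?thesis .
qed

lemma ess_inf_conv_le_0:
  assumes \<rho>: "torus_prob \<rho>"
  shows "ess_inf_T (conv W \<rho>) \<le> 0"
  unfolding ess_inf_T_def
proof (rule Sup_least, safe)
  fix c
  assume c: "AE z in lborel. z \<in> {0..<1} \<longrightarrow> c \<le> conv W \<rho> z"
  show "c \<le> 0"
  proof (rule ccontr)
    assume "\<not> c \<le> 0"
    then have "0 < c"
      by (simp add: not_le)
    then obtain e where e: "0 < e" "ereal e < c"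
      using ereal_dense2[of 0 c] by auto
    have "AE z in lborel. ennreal (e + B) * indicator {0..<1} z \<le> potential \<rho> z * indicator {0..<1} z"
      using c
    proof eventually_elim
      case (elim z)
      then show ?case
        using e conv_ge_iff[OF \<rho>, of e z] B_nonneg by (auto simp: indicator_def)
    qed
    then have "(\<integral>\<^sup>+ z. ennreal (e + B) * indicator {0..<1::real} z \<partial>lborel)
        \<le> (\<integral>\<^sup>+ z. potential \<rho> z * indicator {0..<1} z \<partial>lborel)"
      by (rule nn_integral_mono_AE)
    then have "(\<integral>\<^sup>+ z. ennreal (e + B) * indicator {0..<1::real} z \<partial>lborel) \<le> ennreal B"
      unfolding nn_integral_potential_unit[OF \<rho>] .
    then show False
      using e B_nonneg by (simp add: nn_integral_cmult_indicator ennreal_le_iff)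
  qed
qed

lemma ess_inf_conv_real:
  assumes \<rho>: "torus_prob \<rho>"
  obtains m where "ess_inf_T (conv W \<rho>) = ereal m" "- B \<le> m"
proof -
  have "ereal (- B) \<le> ess_inf_T (conv W \<rho>)"
    by (rule ess_inf_T_ge) (simp add: conv_ge_minus_B[OF \<rho>])
  with ess_inf_conv_le_0[OF \<rho>] show thesis
    using that by (cases "ess_inf_T (conv W \<rho>)") auto
qed

lemma HH_nonneg: "torus_prob \<rho> \<Longrightarrow> 0 \<le> HH W \<rho>"
  unfolding HH_def using ess_inf_conv_le_0 by simp

lemma GG_less_GG:
  assumes "torus_prob \<sigma>" "HH W \<sigma> < HH W \<rho>" "0 < DD \<rho>" "DD \<rho> \<le> DD \<sigma>" "0 \<le> \<alpha>"
  shows "GG \<alpha> W \<sigma> < GG \<alpha> W \<rho>"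
  unfolding GG_def
  by (rule ereal_divide_less_divide[OF HH_nonneg[OF assms(1)] assms(2)])
    (use assms(3-5) in \<open>simp_all add: powr_mono2\<close>)

lemma Wplus_convex_step:
  assumes a: "0 < a - \<epsilon>" "a + \<epsilon> < 1" and "0 \<le> \<epsilon>" and t: "0 < t" "t < 1"
  shows "Wplus a + ennreal (t * C * \<epsilon>\<^sup>2 / 2)
    \<le> ennreal (t/2) * Wplus (a - \<epsilon>) + ennreal (t/2) * Wplus (a + \<epsilon>) + ennreal (1 - t) * Wplus a"
proof -
  define X0 X1 X2 where "X0 = real_of_ereal (W a) + B"
    and "X1 = real_of_ereal (W (a - \<epsilon>)) + B" and "X2 = real_of_ereal (W (a + \<epsilon>)) + B"
  have X: "0 \<le> X0" "0 \<le> X1" "0 \<le> X2"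
    unfolding X0_def X1_def X2_def by (simp_all add: real_W_plus_B_nonneg)
  have Wplus_X: "Wplus a = ennreal X0" "Wplus (a - \<epsilon>) = ennreal X1" "Wplus (a + \<epsilon>) = ennreal X2"
    unfolding X0_def X1_def X2_def using a \<open>0 \<le> \<epsilon>\<close>
    by (simp_all add: Wplus_eq not_Ints_01)
  have "t/2 * (C * \<epsilon>\<^sup>2) \<le> t/2 * (X1 + X2 - 2 * X0)"
    using W_convex[OF \<open>0 \<le> \<epsilon>\<close> a] t by (intro mult_left_mono) (simp_all add: X0_def X1_def X2_def)
  then have "X0 + t * C * \<epsilon>\<^sup>2 / 2 \<le> t/2 * X1 + t/2 * X2 + (1 - t) * X0"
    by (simp add: algebra_simps)
  have products: "ennreal (t/2 * X1) = ennreal (t/2) * ennreal X1"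
    "ennreal (t/2 * X2) = ennreal (t/2) * ennreal X2" "ennreal ((1 - t) * X0) = ennreal (1 - t) * ennreal X0"
    by (rule ennreal_mult; use X t in simp)+
  have "Wplus a + ennreal (t * C * \<epsilon>\<^sup>2 / 2) = ennreal (X0 + t * C * \<epsilon>\<^sup>2 / 2)"
    using X t C_pos by (simp add: Wplus_X)
  also have "\<dots> \<le> ennreal (t/2 * X1 + t/2 * X2 + (1 - t) * X0)"
    by (rule ennreal_leI) fact
  also have "\<dots> = ennreal (t/2 * X1) + ennreal (t/2 * X2) + ennreal ((1 - t) * X0)"
    using X t by simp
  also have "\<dots> = ennreal (t/2) * Wplus (a - \<epsilon>) + ennreal (t/2) * Wplus (a + \<epsilon>) + ennreal (1 - t) * Wplus a"
    unfolding products Wplus_X ..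
  finally show ?thesis .
qed

definition convexity_gain :: "real measure \<Rightarrow> real \<Rightarrow> real \<Rightarrow> real" where
  "convexity_gain \<rho> x0 \<epsilon> = C * \<epsilon>\<^sup>2 / 2 * measure \<rho> (periodic_ball x0 \<epsilon>)"

lemma potential_spread_ge_near:
  assumes \<rho>: "torus_prob \<rho>" and [measurable]: "U \<in> sets borel" and t: "0 < t" "t < 1"
  shows "ennreal (1 - t) * potential \<rho> z \<le> potential (spread \<rho> U \<epsilon> t) z"
proof -
  have meas: "(\<lambda>y. Wplus (z - y)) \<in> borel_measurable \<rho>"
    by (rule measurable_translate_reflect[OF torus_probD(2)[OF \<rho>] Wplus_measurable])
  have "ennreal (1 - t) * potential \<rho> z = (\<integral>\<^sup>+ y. ennreal (1 - t) * Wplus (z - frac y) \<partial>\<rho>)"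
    unfolding potential_def Wplus_diff_frac by (rule nn_integral_cmult[symmetric, OF meas])
  also have "\<dots> \<le> (\<integral>\<^sup>+ y. ennreal (t/2) * Wplus (z - shift_on U \<epsilon> y)
      + ennreal (t/2) * Wplus (z - shift_on U (- \<epsilon>) y) + ennreal (1 - t) * Wplus (z - frac y) \<partial>\<rho>)"
    by (intro nn_integral_mono add_increasing) simp_all
  also have "\<dots> = potential (spread \<rho> U \<epsilon> t) z"
    unfolding potential_def by (rule nn_integral_spread[OF \<rho> _ t, symmetric]) measurable
  finally show ?thesis .
qed

lemma Wplus_spread_ge_pointwise:
  assumes t: "0 < t" "t < 1" and "0 < \<epsilon>"
    and z: "2 * \<epsilon> \<le> frac (z - x0)" "frac (z - x0) \<le> 1 - 2 * \<epsilon>"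
  defines "U \<equiv> periodic_ball x0 \<epsilon>"
  shows "Wplus (z - y) + ennreal (t * C * \<epsilon>\<^sup>2 / 2) * indicator U y
    \<le> ennreal (t/2) * Wplus (z - shift_on U \<epsilon> y) + ennreal (t/2) * Wplus (z - shift_on U (- \<epsilon>) y)
      + ennreal (1 - t) * Wplus (z - frac y)"
proof (cases "y \<in> U")
  case False
  then show ?thesis
    using ennreal_convex_comb_same[of t "Wplus (z - y)"] t
    by (simp add: shift_on_def Wplus_diff_frac)
next
  case True
  then obtain k :: int where k: "dist (x0 + of_int k) y < \<epsilon>"
    unfolding U_def periodic_ball_def UN_iff mem_ball by blast
  \<comment> \<open>z - y is congruent to a mod 1, and a - eps, a + eps stay inside (0, 1).\<close>
  define a where "a = frac (z - x0) - (y - x0 - of_int k)"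
  have a: "0 < a - \<epsilon>" "a + \<epsilon> < 1"
    using z k unfolding a_def dist_real_def by linarith+
  have "z - y - a \<in> \<int>"
    unfolding a_def frac_def by simp
  then have Wplus_shift: "Wplus (z - shift_on U s y) = Wplus (a - s)" for s
    using True unfolding shift_on_def Wplus_diff_frac
    by (intro Wplus_periodic) (simp add: algebra_simps)
  have "Wplus (z - frac y) = Wplus a"
    using Wplus_shift[of 0] by (simp add: shift_on_def)
  moreover have "Wplus (z - y) = Wplus a"
    using \<open>z - y - a \<in> \<int>\<close> by (rule Wplus_periodic)
  ultimately show ?thesis
    using Wplus_convex_step[OF a _ t] \<open>0 < \<epsilon>\<close> True
    by (simp add: Wplus_shift add.commute add.left_commute)
qed

lemma potential_spread_ge_far:
  assumes \<rho>: "torus_prob \<rho>" and t: "0 < t" "t < 1" and "0 < \<epsilon>"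
    and z: "2 * \<epsilon> \<le> frac (z - x0)" "frac (z - x0) \<le> 1 - 2 * \<epsilon>"
  shows "potential \<rho> z + ennreal (t * convexity_gain \<rho> x0 \<epsilon>)
    \<le> potential (spread \<rho> (periodic_ball x0 \<epsilon>) \<epsilon> t) z"
proof -
  interpret \<rho>: prob_space \<rho>
    using torus_probD(1)[OF \<rho>] .
  define U where "U = periodic_ball x0 \<epsilon>"
  define c where "c = t * C * \<epsilon>\<^sup>2 / 2"
  have U_sets: "U \<in> sets \<rho>"
    using torus_probD(2)[OF \<rho>] by (simp add: U_def)
  have "t * convexity_gain \<rho> x0 \<epsilon> = c * measure \<rho> U" "0 \<le> c"
    using t C_pos by (simp_all add: convexity_gain_def c_def U_def)
  then have "potential \<rho> z + ennreal (t * convexity_gain \<rho> x0 \<epsilon>)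
      = (\<integral>\<^sup>+ y. Wplus (z - y) \<partial>\<rho>) + (\<integral>\<^sup>+ y. ennreal c * indicator U y \<partial>\<rho>)"
    unfolding potential_def
    by (simp add: nn_integral_cmult_indicator[OF U_sets] \<rho>.emeasure_eq_measure ennreal_mult')
  also have "\<dots> = (\<integral>\<^sup>+ y. Wplus (z - y) + ennreal c * indicator U y \<partial>\<rho>)"
    using measurable_translate_reflect[OF torus_probD(2)[OF \<rho>] Wplus_measurable] U_sets
    by (intro nn_integral_add[symmetric]) auto
  also have "\<dots> \<le> (\<integral>\<^sup>+ y. ennreal (t/2) * Wplus (z - shift_on U \<epsilon> y)
      + ennreal (t/2) * Wplus (z - shift_on U (- \<epsilon>) y) + ennreal (1 - t) * Wplus (z - frac y) \<partial>\<rho>)"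
    unfolding c_def U_def by (intro nn_integral_mono Wplus_spread_ge_pointwise[OF t \<open>0 < \<epsilon>\<close> z])
  also have "\<dots> = potential (spread \<rho> U \<epsilon> t) z"
    unfolding potential_def by (rule nn_integral_spread[OF \<rho> _ t, symmetric]) (simp_all add: U_def)
  finally show ?thesis
    unfolding U_def .
qed

lemma potential_gt_near:
  assumes \<rho>: "torus_prob \<rho>" and "0 \<le> c + B" "ereal c < conv W \<rho> x0"
  obtains \<delta> r where "0 < \<delta>" "0 < r" "\<And>z. \<bar>z - x0\<bar> < r \<Longrightarrow> ennreal (c + B + \<delta>) < potential \<rho> z"
proof -
  have gt: "ennreal (c + B) < potential \<rho> x0"
    using assms conv_gt_iff by blast
  obtain \<delta> where \<delta>: "0 < \<delta>" "ennreal (c + B + \<delta>) < potential \<rho> x0"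
  proof (cases "potential \<rho> x0")
    case (real p)
    then have "c + B < p"
      using gt \<open>0 \<le> c + B\<close> by (simp add: ennreal_less_iff)
    show ?thesis
    proof (rule that)
      show "0 < (p - (c + B)) / 2"
        using \<open>c + B < p\<close> by simp
      show "ennreal (c + B + (p - (c + B)) / 2) < potential \<rho> x0"
        unfolding real using \<open>c + B < p\<close> \<open>0 \<le> c + B\<close>
        by (subst ennreal_less_iff) (auto simp: field_simps)
    qed
  qed (use that[of 1] in simp)
  then obtain r where "0 < r" "\<And>z. dist z x0 < r \<Longrightarrow> ennreal (c + B + \<delta>) < potential \<rho> z"
    using eventually_less_potential[OF torus_probD(2)[OF \<rho>] \<delta>(2)] unfolding eventually_nhds_metric
    by blast
  then show thesis
    using that[OF \<delta>(1)] by (simp add: dist_real_def)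
qed

lemma potential_spread_ge:
  assumes \<rho>: "torus_prob \<rho>" and t: "0 < t" "t < 1" and "0 < \<epsilon>" "0 \<le> L"
    and near: "\<And>z. \<bar>z - x0\<bar> < 2 * \<epsilon> \<Longrightarrow> ennreal (L + \<delta>) < potential \<rho> z"
    and t_eq: "(1 - t) * (L + \<delta>) = L + t * convexity_gain \<rho> x0 \<epsilon>"
    and L: "ennreal L \<le> potential \<rho> z"
  shows "ennreal (L + t * convexity_gain \<rho> x0 \<epsilon>) \<le> potential (spread \<rho> (periodic_ball x0 \<epsilon>) \<epsilon> t) z"
proof (cases "2 * \<epsilon> \<le> frac (z - x0) \<and> frac (z - x0) \<le> 1 - 2 * \<epsilon>")
  case True
  have "0 \<le> t * convexity_gain \<rho> x0 \<epsilon>"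
    using t C_pos by (simp add: convexity_gain_def)
  then have "ennreal (L + t * convexity_gain \<rho> x0 \<epsilon>) \<le> potential \<rho> z + ennreal (t * convexity_gain \<rho> x0 \<epsilon>)"
    using L \<open>0 \<le> L\<close> by (simp add: add_right_mono)
  also have "\<dots> \<le> potential (spread \<rho> (periodic_ball x0 \<epsilon>) \<epsilon> t) z"
    using True by (intro potential_spread_ge_far[OF \<rho> t \<open>0 < \<epsilon>\<close>]) auto
  finally show ?thesis .
next
  case False
  then obtain w where "\<bar>w\<bar> < 2 * \<epsilon>" "z - x0 - w \<in> \<int>"
    by (rule frac_outside_imp_near_Ints)
  then have "ennreal (L + \<delta>) < potential \<rho> z"
    using near[of "x0 + w"] potential_periodic[of z "x0 + w" \<rho>] by (simp add: algebra_simps)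
  then have "ennreal (1 - t) * ennreal (L + \<delta>) \<le> ennreal (1 - t) * potential \<rho> z"
    using less_imp_le by (intro mult_left_mono) auto
  then have "ennreal (L + t * convexity_gain \<rho> x0 \<epsilon>) \<le> ennreal (1 - t) * potential \<rho> z"
    unfolding t_eq[symmetric] using t by (simp add: ennreal_mult')
  also have "\<dots> \<le> potential (spread \<rho> (periodic_ball x0 \<epsilon>) \<epsilon> t) z"
    by (rule potential_spread_ge_near[OF \<rho> _ t]) simp
  finally show ?thesis .
qed

lemma ess_inf_conv_spread_ge:
  assumes \<rho>: "torus_prob \<rho>" and m: "ess_inf_T (conv W \<rho>) = ereal m" "0 \<le> m + B"
    and t: "0 < t" "t < 1" and "0 < \<epsilon>"
    and near: "\<And>z. \<bar>z - x0\<bar> < 2 * \<epsilon> \<Longrightarrow> ennreal (m + B + \<delta>) < potential \<rho> z"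
    and t_eq: "(1 - t) * (m + B + \<delta>) = m + B + t * convexity_gain \<rho> x0 \<epsilon>"
  shows "ereal (m + t * convexity_gain \<rho> x0 \<epsilon>) \<le> ess_inf_T (conv W (spread \<rho> (periodic_ball x0 \<epsilon>) \<epsilon> t))"
proof -
  let ?\<sigma> = "spread \<rho> (periodic_ball x0 \<epsilon>) \<epsilon> t"
  have \<sigma>: "torus_prob ?\<sigma>"
    by (rule spread_torus_prob[OF \<rho>]) simp
  have "0 \<le> t * convexity_gain \<rho> x0 \<epsilon>"
    using t C_pos by (simp add: convexity_gain_def)
  then have nonneg: "0 \<le> m + t * convexity_gain \<rho> x0 \<epsilon> + B"
    using m(2) by linarith
  have "AE z in lborel. z \<in> {0..<1} \<longrightarrow> ereal (m + t * convexity_gain \<rho> x0 \<epsilon>) \<le> conv W ?\<sigma> z"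
    using AE_ess_inf_T_le[OF m(1)]
  proof eventually_elim
    case (elim z)
    show ?case
    proof
      assume "z \<in> {0..<1}"
      then have "ennreal (m + B) \<le> potential \<rho> z"
        using elim conv_ge_iff[OF \<rho> m(2)] by simp
      then have "ennreal (m + B + t * convexity_gain \<rho> x0 \<epsilon>) \<le> potential ?\<sigma> z"
        using potential_spread_ge[OF \<rho> t \<open>0 < \<epsilon>\<close> m(2) near t_eq] by blast
      then show "ereal (m + t * convexity_gain \<rho> x0 \<epsilon>) \<le> conv W ?\<sigma> z"
        using conv_ge_iff[OF \<sigma> nonneg] by (simp add: algebra_simps)
    qed
  qed
  then show ?thesis
    by (rule ess_inf_T_ge)
qed

lemma spreading_decreases_HH:
  assumes \<rho>: "torus_prob \<rho>" and x0: "x0 \<in> supp_T \<rho>"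
    and above: "ess_inf_T (conv W \<rho>) < conv W \<rho> x0" and "0 < \<epsilon>0"
  obtains \<epsilon> t where "0 < \<epsilon>" "\<epsilon> \<le> \<epsilon>0" "0 < t" "t < 1"
    "HH W (spread \<rho> (periodic_ball x0 \<epsilon>) \<epsilon> t) < HH W \<rho>"
proof -
  obtain m where m: "ess_inf_T (conv W \<rho>) = ereal m" "- B \<le> m"
    using ess_inf_conv_real[OF \<rho>] by blast
  then have "0 \<le> m + B"
    by simp
  obtain \<delta> r where \<delta>: "0 < \<delta>" and "0 < r"
    and near: "\<And>z. \<bar>z - x0\<bar> < r \<Longrightarrow> ennreal (m + B + \<delta>) < potential \<rho> z"
    using potential_gt_near[OF \<rho> \<open>0 \<le> m + B\<close> above[unfolded m(1)]] by blast
  define \<epsilon> where "\<epsilon> = min (r / 2) \<epsilon>0"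
  have \<epsilon>: "0 < \<epsilon>" "\<epsilon> \<le> \<epsilon>0" "2 * \<epsilon> \<le> r"
    using \<open>0 < r\<close> \<open>0 < \<epsilon>0\<close> by (auto simp: \<epsilon>_def)
  define \<kappa> where "\<kappa> = convexity_gain \<rho> x0 \<epsilon>"
  have "0 < \<kappa>"
    using measure_periodic_ball_pos[OF \<rho> x0 \<epsilon>(1)] C_pos \<epsilon>(1) by (simp add: \<kappa>_def convexity_gain_def)
  \<comment> \<open>Near x0 the potential keeps the factor 1 - t of m + B + delta, elsewhere it gains t kappa;
    this t makes both lower bounds equal.\<close>
  define t where "t = \<delta> / (m + B + \<delta> + \<kappa>)"
  have t: "0 < t" "t < 1" and t_eq: "(1 - t) * (m + B + \<delta>) = m + B + t * \<kappa>"
    using \<delta> \<open>0 \<le> m + B\<close> \<open>0 < \<kappa>\<close> by (auto simp: t_def field_simps)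
  have "ereal (m + t * \<kappa>) \<le> ess_inf_T (conv W (spread \<rho> (periodic_ball x0 \<epsilon>) \<epsilon> t))"
    unfolding \<kappa>_def using near \<epsilon>(3) t_eq[unfolded \<kappa>_def]
    by (intro ess_inf_conv_spread_ge[OF \<rho> m(1) \<open>0 \<le> m + B\<close> t \<epsilon>(1)]) auto
  then have "HH W (spread \<rho> (periodic_ball x0 \<epsilon>) \<epsilon> t) \<le> ereal (- (m + t * \<kappa>))"
    unfolding HH_def by (metis ereal_minus_le_minus uminus_ereal.simps(1))
  also have "\<dots> < HH W \<rho>"
    unfolding HH_def m(1) using t \<open>0 < \<kappa>\<close> by simp
  finally show thesis
    using that \<epsilon>(1,2) t by blast
qed

lemma exists_spread_competitor:
  assumes \<rho>: "torus_prob \<rho>" and x0: "x0 \<in> supp_T \<rho>" "x0 \<noteq> frac M" "x0 \<noteq> frac (- M)"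
    and above: "ess_inf_T (conv W \<rho>) < conv W \<rho> x0"
    and D: "DD \<rho> = measure \<rho> (frac ` {-M..M}) - 2 * M" "0 \<le> M" "2 * M \<le> 1"
  obtains \<sigma> where "torus_prob \<sigma>" "DD \<rho> \<le> DD \<sigma>" "HH W \<sigma> < HH W \<rho>"
proof -
  obtain \<eta> where "0 < \<eta>"
    and arc_const: "\<And>w. \<bar>w\<bar> < \<eta> \<Longrightarrow> x0 + w \<in> periodic_arc M \<longleftrightarrow> x0 \<in> periodic_arc M"
    using periodic_arc_locally_constant x0 by (auto simp: supp_T_def)
  then have "0 < \<eta> / 2"
    by simp
  then obtain \<epsilon> t where "0 < \<epsilon>" "\<epsilon> \<le> \<eta> / 2" "0 < t" "t < 1"
    and HH_less: "HH W (spread \<rho> (periodic_ball x0 \<epsilon>) \<epsilon> t) < HH W \<rho>"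
    using spreading_decreases_HH[OF \<rho> x0(1) above] by blast
  show thesis
  proof (rule that)
    show "torus_prob (spread \<rho> (periodic_ball x0 \<epsilon>) \<epsilon> t)"
      by (rule spread_torus_prob[OF \<rho>]) simp
    show "DD \<rho> \<le> DD (spread \<rho> (periodic_ball x0 \<epsilon>) \<epsilon> t)"
      using D \<open>0 < t\<close> \<open>t < 1\<close> \<open>0 < \<epsilon>\<close> \<open>\<epsilon> \<le> \<eta> / 2\<close> arc_const
      by (intro DD_spread_ge[OF \<rho>]) auto
  qed (rule HH_less)
qed

end

theorem corollary3p5:
  fixes W :: "real \<Rightarrow> ereal" and \<alpha> d M :: real and \<rho> :: "real measure"
  assumes "W_hyps W"
    and "\<alpha> \<ge> 0" and "0 < d" and "d \<le> 1"
    and "\<rho> \<in> M_D_ge d" and "\<forall>\<sigma>\<in>M_D_ge d. GG \<alpha> W \<rho> \<le> GG \<alpha> W \<sigma>"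
    and "even_meas \<rho>"
    and "0 \<le> M" and "2 * M \<le> 1"
    and "DD \<rho> = measure \<rho> (frac ` {-M..M}) - 2 * M"
  shows "\<forall>x \<in> supp_T \<rho> - {frac M, frac (- M)}. conv W \<rho> x \<le> ess_inf_T (conv W \<rho>)"
proof (intro ballI, rule ccontr)
  fix x0
  assume x0: "x0 \<in> supp_T \<rho> - {frac M, frac (- M)}" and "\<not> conv W \<rho> x0 \<le> ess_inf_T (conv W \<rho>)"
  then have above: "ess_inf_T (conv W \<rho>) < conv W \<rho> x0"
    by simp
  have \<rho>: "torus_prob \<rho>" and "d \<le> DD \<rho>"
    using assms(5) by (simp_all add: M_D_ge_def)
  obtain B C where "W_kernel W B C"
    using W_kernel_exists[OF assms(1)] .
  then interpret W_kernel W B C .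
  obtain \<sigma> where \<sigma>: "torus_prob \<sigma>" "DD \<rho> \<le> DD \<sigma>" "HH W \<sigma> < HH W \<rho>"
    using exists_spread_competitor[OF \<rho> _ _ _ above assms(10,8,9)] x0 by blast
  then have "\<sigma> \<in> M_D_ge d"
    using \<open>d \<le> DD \<rho>\<close> by (simp add: M_D_ge_def)
  moreover have "GG \<alpha> W \<sigma> < GG \<alpha> W \<rho>"
    using \<sigma> \<open>d \<le> DD \<rho>\<close> assms(2,3) by (intro GG_less_GG) auto
  ultimately show False
    using assms(6) by (simp add: not_le[symmetric])
qed

end
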